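(* Let $T_+$, $T_-$, $T_0$ be ordered (classical or virtual) tangle diagrams which coincide, including the orderings of their endpoints, outside a small disk, inside which $T_+$ consists of a positive crossing of two oriented arcs, $T_-$ of a negative crossing of the same two oriented arcs, and $T_0$ of the orientation-respecting smoothing of that crossing. Then $$\nabla(T_+)-\nabla(T_-)=z\,\nabla(T_0).$$
   Context: An $n$-tangle ($n\ge 1$) is a collection of $n$ disjoint oriented intervals ("strings") and finitely many oriented circles ("closed components") properly embedded in the 3-ball with string endpoints at $2n$ prescribed boundary points, represented by diagrams; virtual diagrams may also contain virtual crossings. For a string, its source is its input and its target its output. A tangle with $n$ strings is ordered if its $2n$ endpoints are numbered by integers $j_1<\dots<j_{2n}$ (up to monotone relabeling) so that every input receives some $j_{2k-1}$ and every output some $j_{2k}$; the ordering is coherent if for each $k$ the string with input $j_{2k-1}$ has output $j_{2k}$. For an ordered tangle diagram $D$: a state $S$ is a set of classical crossings; $D(S)$ is obtained by smoothing each crossing of $S$ respecting orientations and inherits the endpoint numbering. $S$ is coherent if $D(S)$ has no closed components and its ordering is coherent. For coherent $S$, traverse $D(S)$ along the string from $j_1$ to $j_2$, then the string from $j_3$ to $j_4$, etc.; the neighborhood of each smoothed crossing is passed twice, and $S$ is descending if for each crossing of $S$ its neighborhood is first entered along the former overpass. $\operatorname{sign}(S)$ is the product of local writhes of the crossings of $S$. Define $c_n(D)=\sum\operatorname{sign}(S)$ over descending states with $n$ crossings and $\nabla(D)=\sum_{n\ge0}c_n(D)z^n\in\mathbb Z[z]$; this is an invariant of ordered tangles. 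*)

theory Defs
  imports "HOL-Computational_Algebra.Polynomial"
begin

text \<open>Combinatorial (Gauss-diagram) model of ordered (virtual) tangle diagrams.
If \<open>c\<close> is a classical crossing, \<open>Pass c True\<close> is its over-passage and
\<open>Pass c False\<close> its under-passage; internal points with \<open>c\<close> not a crossing
are plain subdivision points (needed e.g. to represent crossingless circles).
Endpoints are numbered 0..2n-1 (normalised up to monotone relabelling): inputs carry
the even labels 2k and outputs the odd labels 2k+1.  The map \<open>nxt\<close> sends every
input or internal point to the next node along the oriented diagram.  Virtual
crossings are invisible in this model.\<close>

datatype node = In nat | Out nat | Pass nat bool

record tangle =
  nstr :: nat
  verts :: "node set"
  cr :: "nat set"
  sgn :: "nat \<Rightarrow> int"
  nxt :: "node \<Rightarrow> node"

definition inputs :: "tangle \<Rightarrow> node set" where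
  "inputs D = {In (2*k) | k. k < nstr D}"

definition outputs :: "tangle \<Rightarrow> node set" where
  "outputs D = {Out (2*k+1) | k. k < nstr D}"

definition wf_tangle :: "tangle \<Rightarrow> bool" where
  "wf_tangle D \<longleftrightarrow> nstr D \<ge> 1 \<and> finite (verts D) \<and> finite (cr D)
     \<and> (\<forall>v\<in>verts D. \<exists>c b. v = Pass c b)
     \<and> (\<forall>c\<in>cr D. Pass c True \<in> verts D \<and> Pass c False \<in> verts D)
     \<and> (\<forall>c\<in>cr D. sgn D c = 1 \<or> sgn D c = -1)
     \<and> bij_betw (nxt D) (inputs D \<union> verts D) (verts D \<union> outputs D)"

fun swp :: "nat set \<Rightarrow> node \<Rightarrow> node" where
  "swp S (Pass c b) = (if c \<in> S then Pass c (\<not> b) else Pass c b)"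
| "swp S x = x"

text \<open>Successor map of the smoothed diagram \<open>D(S)\<close> (orientation-respecting smoothing:
the incoming over-strand continues along the outgoing under-strand and vice versa).
The neighbourhood of a smoothed crossing \<open>c\<close> is passed at node \<open>Pass c True\<close> when it
is entered along the former overpass, and at \<open>Pass c False\<close> otherwise.\<close>
definition snxt :: "tangle \<Rightarrow> nat set \<Rightarrow> node \<Rightarrow> node" where
  "snxt D S = nxt D \<circ> swp S"

definition steps :: "tangle \<Rightarrow> nat set \<Rightarrow> nat \<Rightarrow> nat \<Rightarrow> node" where
  "steps D S k i = (snxt D S ^^ i) (In (2*k))"

definition on_string :: "tangle \<Rightarrow> nat set \<Rightarrow> nat \<Rightarrow> nat \<Rightarrow> bool" where
  "on_string D S k i \<longleftrightarrow> k < nstr D \<and> (\<forall>j\<le>i. steps D S k j \<notin> outputs D)"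

definition coherent_state :: "tangle \<Rightarrow> nat set \<Rightarrow> bool" where
  "coherent_state D S \<longleftrightarrow> S \<subseteq> cr D
     \<and> (\<forall>k < nstr D. \<exists>m. steps D S k m = Out (2*k+1))
     \<and> (\<forall>v\<in>verts D. \<exists>k i. on_string D S k i \<and> steps D S k i = v)"

definition descending_state :: "tangle \<Rightarrow> nat set \<Rightarrow> bool" where
  "descending_state D S \<longleftrightarrow> coherent_state D S \<and>
     (\<forall>c\<in>S. \<exists>k1 i1 k2 i2.
        on_string D S k1 i1 \<and> steps D S k1 i1 = Pass c True \<and>
        on_string D S k2 i2 \<and> steps D S k2 i2 = Pass c False \<and>
        (k1 < k2 \<or> (k1 = k2 \<and> i1 < i2)))"

definition cn :: "tangle \<Rightarrow> nat \<Rightarrow> int" where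
  "cn D n = (\<Sum>S \<in> {S. S \<subseteq> cr D \<and> card S = n \<and> descending_state D S}. \<Prod>c\<in>S. sgn D c)"

definition nabla :: "tangle \<Rightarrow> int poly" where
  "nabla D = (\<Sum>n \<le> card (cr D). monom (cn D n) n)"

text \<open>Crossing change at \<open>c\<close>: the two passages are exchanged (the arc that went over
now goes under) and the local writhe changes sign; all else unchanged.\<close>
definition crossing_change :: "tangle \<Rightarrow> nat \<Rightarrow> tangle" where
  "crossing_change D c = D\<lparr> sgn := (sgn D)(c := - sgn D c),
                            nxt := swp {c} \<circ> nxt D \<circ> swp {c} \<rparr>"

text \<open>Oriented smoothing at \<open>c\<close>: \<open>c\<close> stops being a crossing (its two passages become
plain points) and the strands are reconnected.\<close>
definition smoothing :: "tangle \<Rightarrow> nat \<Rightarrow> tangle" where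
  "smoothing D c = D\<lparr> cr := cr D - {c}, nxt := nxt D \<circ> swp {c} \<rparr>"

end

theory Submission
  imports Defs
begin

text \<open>A state \<open>S\<close> has the same smoothed diagram in \<open>T\<^sub>+\<close> and in \<open>T\<^sub>-\<close>: the crossing change only
exchanges the names of the two passages of \<open>c\<close>. Hence coherence and the descending condition
at every crossing other than \<open>c\<close> agree for both diagrams, and states avoiding \<open>c\<close> cancel.
For a coherent state containing \<open>c\<close>, the traversal meets the two passages of \<open>c\<close> in one
order, so \<open>S\<close> is descending at \<open>c\<close> in exactly one of \<open>T\<^sub>+\<close>, \<open>T\<^sub>-\<close>, where the writhe of \<open>c\<close> is
\<open>+1\<close> resp. \<open>-1\<close>; such a state contributes the sign of \<open>S - {c}\<close> to the difference.
Finally, the state \<open>S - {c}\<close> smooths \<open>T\<^sub>0\<close> to the same diagram as \<open>S\<close> smooths \<open>T\<^sub>+\<close>, which gives \<open>c\<^sub>n(T\<^sub>+) - c\<^sub>n(T\<^sub>-) = c\<^sub>n\<^sub>-\<^sub>1(T\<^sub>0)\<close>.\<close>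

lemma swp_swp [simp]: "swp S (swp S x) = x"
  by (cases x) auto

lemma swp_commute: "swp S (swp S' x) = swp S' (swp S x)"
  by (cases x) auto

lemma swp_singleton_swp: "c \<notin> S \<Longrightarrow> swp {c} (swp S x) = swp (insert c S) x"
  by (cases x) auto

lemma swp_in_outputs_iff [simp]: "swp S x \<in> outputs D \<longleftrightarrow> x \<in> outputs D"
  by (cases x) (auto simp: outputs_def)

lemma swp_eq_Out_iff [simp]: "swp S x = Out n \<longleftrightarrow> x = Out n"
  by (cases x) auto

lemma swp_singleton_eq_Pass_iff:
  "swp {c} x = Pass d b \<longleftrightarrow> x = (if d = c then Pass d (\<not> b) else Pass d b)"
  by (cases x) auto

lemma crossing_change_simps [simp]:
  "nstr (crossing_change D c) = nstr D" "verts (crossing_change D c) = verts D"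
  "cr (crossing_change D c) = cr D" "sgn (crossing_change D c) = (sgn D)(c := - sgn D c)"
  "outputs (crossing_change D c) = outputs D"
  by (auto simp: crossing_change_def outputs_def)

lemma smoothing_simps [simp]:
  "nstr (smoothing D c) = nstr D" "verts (smoothing D c) = verts D"
  "cr (smoothing D c) = cr D - {c}" "sgn (smoothing D c) = sgn D"
  "outputs (smoothing D c) = outputs D"
  by (auto simp: smoothing_def outputs_def)

lemma steps_0: "steps D S k 0 = In (2*k)"
  by (simp add: steps_def)

lemma steps_Suc: "steps D S k (Suc i) = nxt D (swp S (steps D S k i))"
  by (simp add: steps_def snxt_def)

lemma steps_crossing_change: "steps (crossing_change D c) S k i = swp {c} (steps D S k i)"
  by (induction i) (simp_all add: steps_0 steps_Suc crossing_change_def swp_commute[of "{c}" S])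

lemma on_string_crossing_change: "on_string (crossing_change D c) S k i = on_string D S k i"
  by (simp add: on_string_def steps_crossing_change)

lemma steps_smoothing: "c \<notin> S \<Longrightarrow> steps (smoothing D c) S k i = steps D (insert c S) k i"
  by (induction i) (simp_all add: steps_0 steps_Suc smoothing_def swp_commute[of S "{c}"] swp_singleton_swp)

lemma on_string_smoothing: "c \<notin> S \<Longrightarrow> on_string (smoothing D c) S k i = on_string D (insert c S) k i"
  by (simp add: on_string_def steps_smoothing)

lemma on_string_Suc_imp: "on_string D S k (Suc i) \<Longrightarrow> on_string D S k i"
  by (simp add: on_string_def)

definition passed_first :: "tangle \<Rightarrow> nat set \<Rightarrow> nat \<Rightarrow> bool \<Rightarrow> bool" where
  "passed_first D S d b \<longleftrightarrow> (\<exists>k1 i1 k2 i2.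
     on_string D S k1 i1 \<and> steps D S k1 i1 = Pass d b \<and>
     on_string D S k2 i2 \<and> steps D S k2 i2 = Pass d (\<not> b) \<and>
     (k1 < k2 \<or> (k1 = k2 \<and> i1 < i2)))"

lemma descending_state_iff:
  "descending_state D S \<longleftrightarrow> coherent_state D S \<and> (\<forall>d\<in>S. passed_first D S d True)"
  by (simp add: descending_state_def passed_first_def)

lemma passed_first_crossing_change:
  "passed_first (crossing_change D c) S d b = passed_first D S d (if d = c then \<not> b else b)"
  by (simp add: passed_first_def on_string_crossing_change steps_crossing_change
      swp_singleton_eq_Pass_iff)

lemma passed_first_smoothing:
  "c \<notin> S \<Longrightarrow> passed_first (smoothing D c) S d b = passed_first D (insert c S) d b"
  by (simp add: passed_first_def on_string_smoothing steps_smoothing)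

lemma In_notin_verts: "wf_tangle D \<Longrightarrow> In n \<notin> verts D"
  unfolding wf_tangle_def by auto

lemma Pass_in_verts: "wf_tangle D \<Longrightarrow> c \<in> cr D \<Longrightarrow> Pass c b \<in> verts D"
  unfolding wf_tangle_def by (cases b) auto

lemma swp_in_inputs_verts:
  assumes "wf_tangle D" and "S \<subseteq> cr D" and "x \<in> inputs D \<union> verts D"
  shows "swp S x \<in> inputs D \<union> verts D"
  using assms Pass_in_verts[of D] by (cases x) auto

lemma nxt_in_verts_outputs: "wf_tangle D \<Longrightarrow> x \<in> inputs D \<union> verts D \<Longrightarrow> nxt D x \<in> verts D \<union> outputs D"
  unfolding wf_tangle_def bij_betw_def by auto

lemma nxt_inj_on: "wf_tangle D \<Longrightarrow> inj_on (nxt D) (inputs D \<union> verts D)"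
  unfolding wf_tangle_def bij_betw_def by blast

lemma steps_in_inputs_verts:
  assumes wf: "wf_tangle D" and S: "S \<subseteq> cr D"
  shows "on_string D S k i \<Longrightarrow> steps D S k i \<in> inputs D \<union> verts D"
proof (induction i)
  case 0
  then show ?case by (auto simp: steps_0 inputs_def on_string_def)
next
  case (Suc i)
  have "steps D S k i \<in> inputs D \<union> verts D"
    using Suc on_string_Suc_imp by blast
  then have "steps D S k (Suc i) \<in> verts D \<union> outputs D"
    unfolding steps_Suc by (intro nxt_in_verts_outputs[OF wf] swp_in_inputs_verts[OF wf S])
  with Suc.prems show ?case by (auto simp: on_string_def)
qed

lemma steps_Suc_neq_In:
  assumes wf: "wf_tangle D" and S: "S \<subseteq> cr D" and on: "on_string D S k i"
  shows "steps D S k (Suc i) \<noteq> In n"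
proof -
  have "steps D S k (Suc i) \<in> verts D \<union> outputs D"
    unfolding steps_Suc
    by (intro nxt_in_verts_outputs[OF wf] swp_in_inputs_verts[OF wf S] steps_in_inputs_verts[OF wf S on])
  with In_notin_verts[OF wf] show ?thesis by (auto simp: outputs_def)
qed

text \<open>Since \<open>nxt\<close> is injective and only inputs have no predecessor, a node lies at most once
on the strings of \<open>D(S)\<close>.\<close>

lemma steps_inj:
  assumes wf: "wf_tangle D" and S: "S \<subseteq> cr D"
  shows "on_string D S k i \<Longrightarrow> on_string D S k' i' \<Longrightarrow> steps D S k i = steps D S k' i'
     \<Longrightarrow> k = k' \<and> i = i'"
proof (induction i arbitrary: i')
  case 0
  then show ?case
    using steps_Suc_neq_In[OF wf S] on_string_Suc_imp by (cases i') (auto simp: steps_0, metis)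
next
  case (Suc i)
  show ?case
  proof (cases i')
    case 0
    then show ?thesis
      using Suc.prems steps_Suc_neq_In[OF wf S] on_string_Suc_imp by (metis steps_0)
  next
    case (Suc j)
    have on: "on_string D S k i" "on_string D S k' j"
      using Suc.prems \<open>i' = Suc j\<close> on_string_Suc_imp by blast+
    have "swp S (steps D S k i) = swp S (steps D S k' j)"
      using inj_onD[OF nxt_inj_on[OF wf]] Suc.prems \<open>i' = Suc j\<close>
        swp_in_inputs_verts[OF wf S steps_in_inputs_verts[OF wf S]] on
      by (simp add: steps_Suc)
    then have "steps D S k i = steps D S k' j" by (metis swp_swp)
    with Suc.IH on \<open>i' = Suc j\<close> show ?thesis by blast
  qed
qed

lemma passed_first_iff_positions:
  assumes wf: "wf_tangle D" and S: "S \<subseteq> cr D"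
    and p: "on_string D S k i" "steps D S k i = Pass d b"
    and q: "on_string D S k' i'" "steps D S k' i' = Pass d (\<not> b)"
  shows "passed_first D S d b \<longleftrightarrow> k < k' \<or> (k = k' \<and> i < i')"
proof
  assume "passed_first D S d b"
  then obtain k1 i1 k2 i2 where w: "on_string D S k1 i1" "steps D S k1 i1 = Pass d b"
      "on_string D S k2 i2" "steps D S k2 i2 = Pass d (\<not> b)" "k1 < k2 \<or> (k1 = k2 \<and> i1 < i2)"
    unfolding passed_first_def by blast
  have "k1 = k \<and> i1 = i" using steps_inj[OF wf S w(1) p(1)] w(2) p(2) by simp
  moreover have "k2 = k' \<and> i2 = i'" using steps_inj[OF wf S w(3) q(1)] w(4) q(2) by simp
  ultimately show "k < k' \<or> (k = k' \<and> i < i')" using w(5) by simp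
next
  assume "k < k' \<or> (k = k' \<and> i < i')"
  with p q show "passed_first D S d b" unfolding passed_first_def by blast
qed

text \<open>A coherent traversal meets both passages of a crossing, in one of the two orders.\<close>

lemma passed_first_not_iff:
  assumes wf: "wf_tangle D" and coh: "coherent_state D S" and d: "d \<in> cr D"
  shows "\<not> passed_first D S d (\<not> b) \<longleftrightarrow> passed_first D S d b"
proof -
  have S: "S \<subseteq> cr D" using coh by (simp add: coherent_state_def)
  obtain k i k' i' where p: "on_string D S k i" "steps D S k i = Pass d b"
    and q: "on_string D S k' i'" "steps D S k' i' = Pass d (\<not> b)"
    using coh Pass_in_verts[OF wf d] unfolding coherent_state_def by meson
  have "(k, i) \<noteq> (k', i')" using p(2) q(2) by auto
  then show ?thesis
    using passed_first_iff_positions[OF wf S p q] passed_first_iff_positions[OF wf S q, of k i] p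
    by auto
qed

lemma swp_singleton_in_verts_iff:
  "wf_tangle D \<Longrightarrow> c \<in> cr D \<Longrightarrow> swp {c} x \<in> verts D \<longleftrightarrow> x \<in> verts D"
  using Pass_in_verts[of D c] by (cases x) auto

lemma coherent_state_crossing_change:
  assumes wf: "wf_tangle D" and c: "c \<in> cr D"
  shows "coherent_state (crossing_change D c) S \<longleftrightarrow> coherent_state D S"
proof -
  have "(\<forall>v\<in>verts D. \<exists>k i. on_string D S k i \<and> swp {c} (steps D S k i) = v) \<longleftrightarrow>
        (\<forall>v\<in>verts D. \<exists>k i. on_string D S k i \<and> steps D S k i = v)"
    using swp_singleton_in_verts_iff[OF wf c] by (metis swp_swp)
  then show ?thesis
    unfolding coherent_state_def by (simp add: on_string_crossing_change steps_crossing_change)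
qed

lemma coherent_state_smoothing:
  assumes "c \<in> cr D" and "c \<notin> S"
  shows "coherent_state (smoothing D c) S \<longleftrightarrow> S \<subseteq> cr D \<and> coherent_state D (insert c S)"
  using assms unfolding coherent_state_def by (auto simp: on_string_smoothing steps_smoothing)

definition descending_except :: "tangle \<Rightarrow> nat \<Rightarrow> nat set \<Rightarrow> bool" where
  "descending_except D c S \<longleftrightarrow> coherent_state D S \<and> (\<forall>d\<in>S - {c}. passed_first D S d True)"

lemma descending_state_iff_except:
  "descending_state D S \<longleftrightarrow> descending_except D c S \<and> (c \<in> S \<longrightarrow> passed_first D S c True)"
  unfolding descending_state_iff descending_except_def by blast

lemma descending_state_crossing_change_iff:
  assumes "wf_tangle D" and "c \<in> cr D"
  shows "descending_state (crossing_change D c) S \<longleftrightarrow>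
    descending_except D c S \<and> (c \<in> S \<longrightarrow> passed_first D S c False)"
  unfolding descending_state_iff descending_except_def
    coherent_state_crossing_change[OF assms] passed_first_crossing_change
  by auto

lemma descending_state_smoothing_iff:
  assumes "c \<in> cr D" and "c \<notin> S"
  shows "descending_state (smoothing D c) S \<longleftrightarrow> S \<subseteq> cr D \<and> descending_except D c (insert c S)"
  using assms unfolding descending_state_iff descending_except_def
  by (auto simp: coherent_state_smoothing passed_first_smoothing)

lemma cn_eq_sum_Pow:
  assumes "finite (cr D)"
  shows "cn D n = (\<Sum>S\<in>Pow (cr D). if card S = n \<and> descending_state D S then prod (sgn D) S else 0)"
proof -
  have "{S. S \<subseteq> cr D \<and> card S = n \<and> descending_state D S}
      = {S \<in> Pow (cr D). card S = n \<and> descending_state D S}"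
    by auto
  then show ?thesis unfolding cn_def using assms sum.inter_filter[of "Pow (cr D)"] by simp
qed

text \<open>Exactly one of the two diagrams is descending at \<open>c\<close>, where the writhes of \<open>c\<close> are
opposite; the sign of \<open>S\<close> therefore survives the difference once, with \<open>c\<close> removed.\<close>

lemma state_term_crossing_change_diff:
  assumes wf: "wf_tangle D" and c: "c \<in> cr D" and pos: "sgn D c = 1" and S: "S \<subseteq> cr D"
  shows "(if card S = n \<and> descending_state D S then prod (sgn D) S else 0)
       - (if card S = n \<and> descending_state (crossing_change D c) S
          then prod (sgn (crossing_change D c)) S else 0)
       = (if c \<in> S \<and> card S = n \<and> descending_except D c S then prod (sgn D) (S - {c}) else 0)"
proof (cases "c \<in> S")
  case False
  then have sgns: "prod (sgn (crossing_change D c)) S = prod (sgn D) S"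
    by (intro prod.cong) auto
  have desc: "descending_state D S \<longleftrightarrow> descending_except D c S"
    using False descending_state_iff_except[of D S c] by simp
  have desc_cc: "descending_state (crossing_change D c) S \<longleftrightarrow> descending_except D c S"
    using False descending_state_crossing_change_iff[OF wf c, of S] by simp
  show ?thesis unfolding sgns desc desc_cc using False by simp
next
  case True
  have fin: "finite S" using S wf finite_subset unfolding wf_tangle_def by blast
  have "prod (sgn (crossing_change D c)) (S - {c}) = prod (sgn D) (S - {c})"
    by (intro prod.cong) auto
  then have sgns: "prod (sgn D) S = prod (sgn D) (S - {c})"
    "prod (sgn (crossing_change D c)) S = - prod (sgn D) (S - {c})"
    unfolding prod.remove[OF fin True] by (simp_all add: pos)
  have desc: "descending_state D S \<longleftrightarrow> descending_except D c S \<and> passed_first D S c True"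
    using True descending_state_iff_except[of D S c] by simp
  have desc_cc: "descending_state (crossing_change D c) S \<longleftrightarrow>
      descending_except D c S \<and> \<not> passed_first D S c True"
  proof -
    have "descending_except D c S \<Longrightarrow> passed_first D S c False \<longleftrightarrow> \<not> passed_first D S c True"
      using passed_first_not_iff[OF wf _ c, of S True] unfolding descending_except_def by auto
    then show ?thesis using True descending_state_crossing_change_iff[OF wf c, of S] by blast
  qed
  show ?thesis unfolding sgns desc desc_cc using True by (cases "passed_first D S c True") simp_all
qed

lemma sum_Pow_insert_vanishing:
  assumes "finite A" and "a \<notin> A" and "\<And>S. S \<subseteq> A \<Longrightarrow> f S = 0"
  shows "(\<Sum>S\<in>Pow (insert a A). f S) = (\<Sum>S\<in>Pow A. f (insert a S))"
proof -
  have "inj_on (insert a) (Pow A)" using assms(2) by (auto simp: inj_on_def)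
  moreover have "Pow A \<inter> insert a ` Pow A = {}" using assms(2) by auto
  ultimately show ?thesis
    using assms by (simp add: Pow_insert sum.union_disjoint sum.reindex)
qed

lemma cn_crossing_change_diff:
  assumes wf: "wf_tangle D" and c: "c \<in> cr D" and pos: "sgn D c = 1"
  shows "cn D n - cn (crossing_change D c) n = (if n = 0 then 0 else cn (smoothing D c) (n - 1))"
proof -
  have fin: "finite (cr D - {c})" using wf unfolding wf_tangle_def by blast
  have cr_eq: "cr D = insert c (cr D - {c})" using c by blast
  define g where "g S = (if c \<in> S \<and> card S = n \<and> descending_except D c S
    then prod (sgn D) (S - {c}) else 0)" for S
  have "cn D n - cn (crossing_change D c) n = (\<Sum>S\<in>Pow (cr D). g S)"
    using fin state_term_crossing_change_diff[OF wf c pos]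
    by (simp add: cn_eq_sum_Pow g_def flip: sum_subtractf)
  also have "\<dots> = (\<Sum>S\<in>Pow (cr D - {c}). g (insert c S))"
    by (subst cr_eq, rule sum_Pow_insert_vanishing) (use fin in \<open>auto simp: g_def\<close>)
  also have "\<dots> = (\<Sum>S\<in>Pow (cr D - {c}). if n \<noteq> 0 \<and> card S = n - 1 \<and>
      descending_state (smoothing D c) S then prod (sgn (smoothing D c)) S else 0)"
  proof (rule sum.cong [OF refl])
    fix S assume "S \<in> Pow (cr D - {c})"
    then have "c \<notin> S" "S \<subseteq> cr D" "finite S" using fin finite_subset by auto
    then show "g (insert c S) = (if n \<noteq> 0 \<and> card S = n - 1 \<and>
        descending_state (smoothing D c) S then prod (sgn (smoothing D c)) S else 0)"
      by (auto simp: g_def descending_state_smoothing_iff[OF c])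
  qed
  also have "\<dots> = (if n = 0 then 0 else cn (smoothing D c) (n - 1))"
    using fin by (simp add: cn_eq_sum_Pow)
  finally show ?thesis .
qed

theorem mainTheorem3:
  fixes Tp :: tangle and c :: nat
  assumes "wf_tangle Tp" and "c \<in> cr Tp" and "sgn Tp c = 1"
  shows "nabla Tp - nabla (crossing_change Tp c) = [:0, 1:] * nabla (smoothing Tp c)"
proof -
  let ?Tm = "crossing_change Tp c" and ?T0 = "smoothing Tp c"
  have "finite (cr Tp)" using assms(1) unfolding wf_tangle_def by blast
  then obtain N where N: "card (cr Tp) = Suc N" and N0: "card (cr ?T0) = N"
    using assms(2) by (metis card_Suc_Diff1 smoothing_simps(3))
  have "nabla Tp - nabla ?Tm = (\<Sum>n\<le>Suc N. monom (cn Tp n - cn ?Tm n) n)"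
    unfolding nabla_def crossing_change_simps N sum_subtractf[symmetric] by (simp add: diff_monom)
  also have "\<dots> = (\<Sum>n\<le>Suc N. monom (if n = 0 then 0 else cn ?T0 (n - 1)) n)"
    using cn_crossing_change_diff[OF assms] by simp
  also have "\<dots> = (\<Sum>n\<le>N. monom (cn ?T0 n) (Suc n))"
    by (subst sum.atMost_Suc_shift) simp
  also have "\<dots> = [:0, 1:] * nabla ?T0"
    unfolding nabla_def N0 by (simp add: sum_distrib_left monom_Suc)
  finally show ?thesis .
qed

end
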